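(* Let $q\ge 3$, $s\in\mathbb{N}$, and let $Y_s=\{y_i\}_{i=1}^{2s}$ be any collection of points with $y_{2s}<\cdots<y_1<y_{2s}+2\pi=:y_0$. Then there exists a function $f\in\Delta^{(q)}(Y_s)\cap W^{q-2}$ such that $$E_n^{(q)}(f,Y_s)\ge C(q,Y_s),\qquad n\in\mathbb{N},$$ where $C(q,Y_s)>0$ depends only on $q$ and $Y_s$.
   Context: A function $f\in C[a,b]$ is called $q$-monotone ($q\ge 2$) if $f\in C^{q-2}(a,b)$ and $f^{(q-2)}$ is convex on $(a,b)$. For $Y_s$ as in the claim, $\Delta^{(q)}(Y_s)$ denotes the set of continuous $2\pi$-periodic functions $f:\mathbb{R}\to\mathbb{R}$ such that $(-1)^{i-1}f$ is $q$-monotone on $[y_i,y_{i-1}]$ for each $1\le i\le 2s$. For $r\in\mathbb{N}$, $W^r$ denotes the class of $2\pi$-periodic functions $f$ with $f^{(r-1)}$ locally absolutely continuous on $\mathbb{R}$ and $\operatorname{ess\,sup}_{x\in\mathbb{R}}|f^{(r)}(x)|\le 2$. $\mathcal{T}_n$ is the space of real trigonometric polynomials of degree $\le n$. For a continuous $2\pi$-periodic $g$, $\|g\|=\max_{x\in\mathbb{R}}|g(x)|$, and $E_n^{(q)}(g,Y_s):=\inf_{T_n\in\mathcal{T}_n\cap\Delta^{(q)}(Y_s)}\|g-T_n\|$. *)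

theory Defs
  imports "HOL-Analysis.Analysis"
begin

definition q_monotone_on :: "nat \<Rightarrow> real \<Rightarrow> real \<Rightarrow> (real \<Rightarrow> real) \<Rightarrow> bool" where
  "q_monotone_on q a b f \<longleftrightarrow>
     continuous_on {a..b} f \<and>
     (\<exists>D :: nat \<Rightarrow> real \<Rightarrow> real.
        (\<forall>x\<in>{a<..<b}. D 0 x = f x) \<and>
        (\<forall>k<q-2. \<forall>x\<in>{a<..<b}. (D k has_real_derivative D (Suc k) x) (at x)) \<and>
        continuous_on {a<..<b} (D (q-2)) \<and>
        convex_on {a<..<b} (D (q-2)))"

definition periodic_2pi :: "(real \<Rightarrow> real) \<Rightarrow> bool" where
  "periodic_2pi f \<longleftrightarrow> (\<forall>x. f (x + 2 * pi) = f x)"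

definition admissible_Y :: "nat \<Rightarrow> (nat \<Rightarrow> real) \<Rightarrow> bool" where
  "admissible_Y s y \<longleftrightarrow> s \<ge> 1 \<and> (\<forall>i<2 * s. y (Suc i) < y i) \<and> y 0 = y (2 * s) + 2 * pi"

definition Delta :: "nat \<Rightarrow> nat \<Rightarrow> (nat \<Rightarrow> real) \<Rightarrow> (real \<Rightarrow> real) set" where
  "Delta q s y = {f. continuous_on UNIV f \<and> periodic_2pi f \<and>
      (\<forall>i\<in>{1..2 * s}. q_monotone_on q (y i) (y (i-1)) (\<lambda>x. (-1) ^ (i-1) * f x))}"

definition abs_cont_on :: "real \<Rightarrow> real \<Rightarrow> (real \<Rightarrow> real) \<Rightarrow> bool" where
  "abs_cont_on a b g \<longleftrightarrow>
     (\<forall>\<epsilon>>0. \<exists>\<delta>>0. \<forall>(n::nat) (l::nat \<Rightarrow> real) (u::nat \<Rightarrow> real).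
        (\<forall>k<n. a \<le> l k \<and> l k \<le> u k \<and> u k \<le> b) \<and>
        (\<forall>j<n. \<forall>k<n. j \<noteq> k \<longrightarrow> u j \<le> l k \<or> u k \<le> l j) \<and>
        (\<Sum>k<n. u k - l k) < \<delta> \<longrightarrow>
        (\<Sum>k<n. \<bar>g (u k) - g (l k)\<bar>) < \<epsilon>)"

definition locally_abs_cont :: "(real \<Rightarrow> real) \<Rightarrow> bool" where
  "locally_abs_cont g \<longleftrightarrow> (\<forall>a b. abs_cont_on a b g)"

text \<open>W^r: 2pi-periodic f with f^(r-1) locally absolutely continuous and
  ess sup |f^(r)| \<le> 2 (f^(r) being the a.e. derivative of f^(r-1)).\<close>
definition W :: "nat \<Rightarrow> (real \<Rightarrow> real) set" where
  "W r = {f. periodic_2pi f \<and>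
     (\<exists>D :: nat \<Rightarrow> real \<Rightarrow> real.
        D 0 = f \<and>
        (\<forall>k<r-1. \<forall>x. (D k has_real_derivative D (Suc k) x) (at x)) \<and>
        locally_abs_cont (D (r-1)) \<and>
        (AE x in lborel. \<exists>d. (D (r-1) has_real_derivative d) (at x) \<and> \<bar>d\<bar> \<le> 2))}"

definition trig_poly :: "nat \<Rightarrow> (real \<Rightarrow> real) \<Rightarrow> bool" where
  "trig_poly n T \<longleftrightarrow> (\<exists>a b :: nat \<Rightarrow> real.
     \<forall>x. T x = a 0 + (\<Sum>k=1..n. a k * cos (real k * x) + b k * sin (real k * x)))"

definition sup_norm :: "(real \<Rightarrow> real) \<Rightarrow> real" where
  "sup_norm g = (SUP x. \<bar>g x\<bar>)"

definition E_shape :: "nat \<Rightarrow> nat \<Rightarrow> nat \<Rightarrow> (nat \<Rightarrow> real) \<Rightarrow> (real \<Rightarrow> real) \<Rightarrow> real" where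
  "E_shape n q s y g = (INF T \<in> {T. trig_poly n T \<and> T \<in> Delta q s y}. sup_norm (\<lambda>x. g x - T x))"

end

(* The extremal function F is the 2 pi-periodic (q-2)-fold antiderivative of the sawtooth
   (pi - t)/2, placed so that the sawtooth jumps by pi at the points y_1 + 2 pi k.  Its (q-2)-th
   derivative is affine on every arc of Y_s, so F is q-monotone there with either sign, and its
   (q-3)-th derivative is Lipschitz, so F lies in W^(q-2).

   For a trigonometric polynomial T in Delta^(q)(Y_s), the function T^(q-2) is smooth, convex on
   (y_1, y_0) and concave on (y_2, y_1).  If |F - T| <= e, then on a window of length H the
   (q-2)-th forward differences of F and T with step h = H/(q-2) differ by at most 2^(q-2) e, so
   by the mean value theorem T^(q-2) comes within 2^(q-2) e / h^(q-2) of the sawtooth somewhere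
   in the window.  Sampling two windows on each side of y_1, convexity and concavity at y_1 show
   that T^(q-2) cannot follow the jump of size pi, which forces e >= h^(q-2) / (5 2^(q-2)). *)
theory Submission
  imports Defs
begin

section \<open>Forward differences\<close>

fun fwd_diff :: "nat \<Rightarrow> real \<Rightarrow> (real \<Rightarrow> real) \<Rightarrow> real \<Rightarrow> real" where
  "fwd_diff 0 h g x = g x"
| "fwd_diff (Suc m) h g x = fwd_diff m h g (x + h) - fwd_diff m h g x"

lemma fwd_diff_abs_le:
  assumes "\<And>z. \<bar>g z\<bar> \<le> B"
  shows "\<bar>fwd_diff m h g x\<bar> \<le> 2 ^ m * B"
proof (induction m arbitrary: x)
  case 0
  then show ?case using assms by simp
next
  case (Suc m)
  have "\<bar>fwd_diff (Suc m) h g x\<bar> \<le> \<bar>fwd_diff m h g (x + h)\<bar> + \<bar>fwd_diff m h g x\<bar>"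
    by simp
  also have "\<dots> \<le> 2 ^ Suc m * B"
    using Suc[of "x + h"] Suc[of x] by simp
  finally show ?case .
qed

lemma fwd_diff_diff: "fwd_diff m h (\<lambda>z. f z - g z) x = fwd_diff m h f x - fwd_diff m h g x"
  by (induction m arbitrary: x) auto

lemma fwd_diff_cong:
  assumes "0 \<le> h" "\<And>z. x \<le> z \<Longrightarrow> z \<le> x + real m * h \<Longrightarrow> f z = g z"
  shows "fwd_diff m h f x = fwd_diff m h g x"
  using assms(2)
proof (induction m arbitrary: x)
  case 0
  then show ?case by simp
next
  case (Suc m)
  have "fwd_diff m h f (x + h) = fwd_diff m h g (x + h)" "fwd_diff m h f x = fwd_diff m h g x"
    by (rule Suc.IH, rule Suc.prems, use \<open>0 \<le> h\<close> in \<open>auto simp: algebra_simps\<close>)+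
  then show ?case by simp
qed

lemma fwd_diff_has_real_derivative:
  assumes "\<And>w. (g has_real_derivative g' w) (at w)"
  shows "((\<lambda>z. fwd_diff m h g z) has_real_derivative fwd_diff m h g' z) (at z)"
proof (induction m arbitrary: z)
  case 0
  then show ?case using assms by simp
next
  case (Suc m)
  have "((\<lambda>z. fwd_diff m h g (z + h)) has_real_derivative fwd_diff m h g' (z + h)) (at z)"
    using Suc[of "z + h"] DERIV_shift by blast
  then show ?case using DERIV_diff Suc[of z] by fastforce
qed

lemma fwd_diff_mean_value:
  assumes "0 < h" "\<And>k w. k < m \<Longrightarrow> (g k has_real_derivative g (Suc k) w) (at w)"
  shows "\<exists>\<xi>. x \<le> \<xi> \<and> \<xi> \<le> x + real m * h \<and> fwd_diff m h (g 0) x = h ^ m * g m \<xi>"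
  using assms(2)
proof (induction m arbitrary: g x)
  case 0
  then show ?case by auto
next
  case (Suc m)
  have "\<And>w. ((\<lambda>z. fwd_diff m h (g 0) z) has_real_derivative fwd_diff m h (g 1) w) (at w)"
    by (rule fwd_diff_has_real_derivative) (use Suc.prems in auto)
  then obtain \<eta> where \<eta>: "x < \<eta>" "\<eta> < x + h"
    "fwd_diff (Suc m) h (g 0) x = h * fwd_diff m h (g 1) \<eta>"
    using MVT2[of x "x + h" "fwd_diff m h (g 0)" "fwd_diff m h (g 1)"] \<open>0 < h\<close> by auto
  obtain \<xi> where \<xi>: "\<eta> \<le> \<xi>" "\<xi> \<le> \<eta> + real m * h" "fwd_diff m h (g 1) \<eta> = h ^ m * g (Suc m) \<xi>"
    using Suc.IH[of "\<lambda>k. g (Suc k)" \<eta>] Suc.prems by auto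
  show ?case
    using \<eta> \<xi> by (intro exI[of _ \<xi>]) (auto simp: algebra_simps)
qed

lemma fwd_diff_derivs_close:
  assumes "0 < h" and close: "\<And>z. \<bar>f z - g z\<bar> \<le> e"
    and P: "\<And>k z. k < m \<Longrightarrow> (P k has_real_derivative P (Suc k) z) (at z)"
    and Q: "\<And>k z. k < m \<Longrightarrow> (Q k has_real_derivative Q (Suc k) z) (at z)"
    and f: "\<And>z. x \<le> z \<Longrightarrow> z \<le> x + real m * h \<Longrightarrow> f z = P 0 z" and g: "g = Q 0"
  shows "\<exists>\<zeta> \<xi>. \<zeta> \<in> {x..x + real m * h} \<and> \<xi> \<in> {x..x + real m * h} \<and>
           \<bar>P m \<zeta> - Q m \<xi>\<bar> \<le> 2 ^ m * e / h ^ m"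
proof -
  obtain \<zeta> where \<zeta>: "\<zeta> \<in> {x..x + real m * h}" "fwd_diff m h (P 0) x = h ^ m * P m \<zeta>"
    using fwd_diff_mean_value[of h m P x] \<open>0 < h\<close> P by auto
  obtain \<xi> where \<xi>: "\<xi> \<in> {x..x + real m * h}" "fwd_diff m h (Q 0) x = h ^ m * Q m \<xi>"
    using fwd_diff_mean_value[of h m Q x] \<open>0 < h\<close> Q by auto
  have "fwd_diff m h f x = fwd_diff m h (P 0) x"
    using fwd_diff_cong[of h x m f "P 0"] f \<open>0 < h\<close> by simp
  then have "h ^ m * \<bar>P m \<zeta> - Q m \<xi>\<bar> = \<bar>fwd_diff m h (\<lambda>z. f z - g z) x\<bar>"
    using \<open>0 < h\<close> by (simp add: fwd_diff_diff g \<zeta> \<xi> abs_mult flip: right_diff_distrib)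
  also have "\<dots> \<le> 2 ^ m * e"
    using close by (rule fwd_diff_abs_le)
  finally show ?thesis
    using \<zeta> \<xi> \<open>0 < h\<close> by (intro exI conjI) (auto simp: pos_le_divide_eq mult.commute)
qed

section \<open>One-sided arguments for derivatives and convex functions\<close>

lemma has_real_derivative_glue:
  assumes "(gl has_real_derivative d) (at x)" "(gr has_real_derivative d) (at x)"
    and "gl x = f x" "gr x = f x" "0 < \<delta>"
    and left: "\<And>z. x - \<delta> < z \<Longrightarrow> z < x \<Longrightarrow> f z = gl z"
    and right: "\<And>z. x < z \<Longrightarrow> z < x + \<delta> \<Longrightarrow> f z = gr z"
  shows "(f has_real_derivative d) (at x)"
proof -
  let ?Q = "\<lambda>g z. (g z - g x) / (z - x)"
  have "eventually (\<lambda>z. z \<in> {x - \<delta><..<x}) (at_left x)"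
    by (rule eventually_at_left_real) (use \<open>0 < \<delta>\<close> in simp)
  then have ev_left: "eventually (\<lambda>z. ?Q gl z = ?Q f z) (at_left x)"
    by (rule eventually_mono) (use left \<open>gl x = f x\<close> in force)
  have "eventually (\<lambda>z. z \<in> {x<..<x + \<delta>}) (at_right x)"
    by (rule eventually_at_right_real) (use \<open>0 < \<delta>\<close> in simp)
  then have ev_right: "eventually (\<lambda>z. ?Q gr z = ?Q f z) (at_right x)"
    by (rule eventually_mono) (use right \<open>gr x = f x\<close> in force)
  have "(?Q gl \<longlongrightarrow> d) (at_left x)" "(?Q gr \<longlongrightarrow> d) (at_right x)"
    using assms(1,2) unfolding has_field_derivative_iff filterlim_at_split by blast+
  then show ?thesis
    using tendsto_cong[OF ev_left] tendsto_cong[OF ev_right]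
    unfolding has_field_derivative_iff filterlim_at_split by blast
qed

lemma convex_on_cong:
  assumes "convex_on S f" "\<And>x. x \<in> S \<Longrightarrow> f x = g x"
  shows "convex_on S g"
proof (rule convex_onI)
  show S: "convex S"
    using assms(1) by (rule convex_on_imp_convex)
  fix t :: real and x y assume "0 < t" "t < 1" "x \<in> S" "y \<in> S"
  moreover have "(1 - t) *\<^sub>R x + t *\<^sub>R y \<in> S"
    using convexD[OF S \<open>x \<in> S\<close> \<open>y \<in> S\<close>, of "1 - t" t] calculation by simp
  ultimately show "g ((1 - t) *\<^sub>R x + t *\<^sub>R y) \<le> (1 - t) * g x + t * g y"
    using convex_onD[OF assms(1), of t x y] assms(2) by simp
qed

lemma convex_on_three_points:
  assumes "convex_on S w" "x \<in> S" "z \<in> S" "x < y" "y < z"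
  shows "(z - x) * w y \<le> (z - y) * w x + (y - x) * w z"
proof -
  have "closed_segment x z \<subseteq> S"
    using assms convex_on_imp_convex[OF assms(1)] by (simp add: convex_contains_segment)
  then have "{x..z} \<subseteq> S"
    using assms by (simp add: closed_segment_eq_real_ivl)
  then have "convex_on {x..z} w"
    using convex_on_subset[OF assms(1)] by simp
  then have "w y \<le> (w z - w x) / (z - x) * (y - x) + w x"
    using convex_onD_Icc' assms(4,5) by simp
  then have "(z - x) * w y \<le> (z - x) * ((w z - w x) / (z - x) * (y - x) + w x)"
    using assms(4,5) by (simp add: mult_left_mono)
  also have "\<dots> = (z - y) * w x + (y - x) * w z"
    using assms(4,5) by (simp add: field_simps)
  finally show ?thesis .
qed

lemma convex_on_slope_at_left_end:
  assumes conv: "convex_on {a<..<b} w" and cont: "continuous (at_right a) w"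
    and "a < x" "x < z" "z < b"
  shows "(z - x) * (w x - w a) \<le> (x - a) * (w z - w x)"
proof -
  let ?\<Phi> = "\<lambda>t. (z - t) * w x - (z - x) * w t - (x - t) * w z"
  have "(?\<Phi> \<longlongrightarrow> ?\<Phi> a) (at_right a)"
    using cont unfolding continuous_within by (intro tendsto_intros)
  moreover have "eventually (\<lambda>t. ?\<Phi> t \<le> 0) (at_right a)"
    using eventually_at_right_real[OF \<open>a < x\<close>]
  proof (rule eventually_mono)
    fix t assume "t \<in> {a<..<x}"
    then show "?\<Phi> t \<le> 0"
      using convex_on_three_points[OF conv, of t z x] assms(3-5) by auto
  qed
  ultimately have "?\<Phi> a \<le> 0"
    by (rule tendsto_upperbound) simp
  then show ?thesis by (simp add: algebra_simps)
qed

lemma convex_on_slope_at_right_end: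
  assumes conv: "convex_on {a<..<b} w" and cont: "continuous (at_left b) w"
    and "a < z" "z < x" "x < b"
  shows "(x - z) * (w x - w b) \<le> (b - x) * (w z - w x)"
proof -
  let ?\<Phi> = "\<lambda>t. (t - z) * w x - (t - x) * w z - (x - z) * w t"
  have "(?\<Phi> \<longlongrightarrow> ?\<Phi> b) (at_left b)"
    using cont unfolding continuous_within by (intro tendsto_intros)
  moreover have "eventually (\<lambda>t. ?\<Phi> t \<le> 0) (at_left b)"
    using eventually_at_left_real[OF \<open>x < b\<close>]
  proof (rule eventually_mono)
    fix t assume "t \<in> {x<..<b}"
    then show "?\<Phi> t \<le> 0"
      using convex_on_three_points[OF conv, of z t x] assms(3-5) by auto
  qed
  ultimately have "?\<Phi> b \<le> 0"
    by (rule tendsto_upperbound) simp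
  then show ?thesis by (simp add: algebra_simps)
qed

lemma le_of_cross_mult_le:
  fixes d d' g g' r \<epsilon> :: real
  assumes "d' * g \<le> d * g'" "0 < d'" "0 \<le> d" "d \<le> r * d'" "g' \<le> \<epsilon>" "0 \<le> \<epsilon>"
  shows "g \<le> r * \<epsilon>"
proof -
  have "d' * g \<le> d * \<epsilon>"
    using assms(1,3,5) by (meson mult_left_mono order_trans)
  also have "\<dots> \<le> d' * (r * \<epsilon>)"
    using mult_right_mono[OF assms(4,6)] by (simp add: algebra_simps)
  finally show ?thesis
    using \<open>0 < d'\<close> by simp
qed

lemma convex_concave_rise_bound:
  fixes u :: "real \<Rightarrow> real"
  assumes conv_right: "convex_on {c<..<b} u" and conv_left: "convex_on {a<..<c} (\<lambda>x. - u x)"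
    and cont: "isCont u c" and H: "0 < H" "a < c - 4 * H" "c + 4 * H < b" and "0 \<le> \<epsilon>"
    and x1: "x1 \<in> {c - 4 * H..c - 3 * H}" and x2: "x2 \<in> {c - 2 * H..c - H}"
    and left_rise: "u x2 - u x1 \<le> \<epsilon>"
    and x3: "x3 \<in> {c + H..c + 2 * H}" and x4: "x4 \<in> {c + 3 * H..c + 4 * H}"
    and right_rise: "u x4 - u x3 \<le> \<epsilon>"
  shows "u x3 - u x2 \<le> 4 * \<epsilon>"
proof -
  have "u x3 - u c \<le> 2 * \<epsilon>"
  proof (rule le_of_cross_mult_le)
    show "(x4 - x3) * (u x3 - u c) \<le> (x3 - c) * (u x4 - u x3)"
      using x3 x4 H by (intro convex_on_slope_at_left_end[OF conv_right]
          continuous_at_imp_continuous_at_within[OF cont]) auto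
  qed (use x3 x4 H right_rise \<open>0 \<le> \<epsilon>\<close> in auto)
  moreover have "- u x2 - - u c \<le> 2 * \<epsilon>"
  proof (rule le_of_cross_mult_le)
    show "(x2 - x1) * (- u x2 - - u c) \<le> (c - x2) * (- u x1 - - u x2)"
      using x1 x2 H continuous_minus[OF continuous_at_imp_continuous_at_within[OF cont]]
      by (intro convex_on_slope_at_right_end[OF conv_left]) auto
  qed (use x1 x2 H left_rise \<open>0 \<le> \<epsilon>\<close> in auto)
  ultimately show ?thesis
    by simp
qed

section \<open>The classes \<open>Delta\<close> and \<open>W\<close>\<close>

lemma derivs_eq_on_open:
  assumes "open S"
    and D0: "\<And>x. x \<in> S \<Longrightarrow> D 0 x = G 0 x"
    and D: "\<And>k x. k < m \<Longrightarrow> x \<in> S \<Longrightarrow> (D k has_real_derivative D (Suc k) x) (at x)"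
    and G: "\<And>k x. k < m \<Longrightarrow> (G k has_real_derivative G (Suc k) x) (at x)"
  shows "k \<le> m \<Longrightarrow> x \<in> S \<Longrightarrow> D k x = G k x"
proof (induction k arbitrary: x)
  case 0
  then show ?case using D0 by simp
next
  case (Suc k)
  then have "(D k has_real_derivative G (Suc k) x) (at x)"
    using has_field_derivative_transform_within_open[OF G \<open>open S\<close>, of k x "D k"] by simp
  then show ?case
    using D[of k x] Suc.prems DERIV_unique by fastforce
qed

lemma q_monotone_on_convex_deriv:
  assumes "q_monotone_on (m + 2) a b g"
    and G: "\<And>k x. k < m \<Longrightarrow> (G k has_real_derivative G (Suc k) x) (at x)"
    and "\<And>x. g x = G 0 x"
  shows "convex_on {a<..<b} (G m)"
proof -
  obtain D where D0: "\<forall>x\<in>{a<..<b}. D 0 x = g x"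
    and D: "\<forall>k<m. \<forall>x\<in>{a<..<b}. (D k has_real_derivative D (Suc k) x) (at x)"
    and conv: "convex_on {a<..<b} (D m)"
    using assms(1) unfolding q_monotone_on_def by auto
  have "D m x = G m x" if "x \<in> {a<..<b}" for x
    using derivs_eq_on_open[of "{a<..<b}" D G m m x] D0 D G assms(3) that by simp
  then show ?thesis
    using conv by (rule convex_on_cong[rotated])
qed

lemma q_monotone_onI_affine:
  assumes "continuous_on {a..b} g"
    and "\<And>x. x \<in> {a<..<b} \<Longrightarrow> g x = P 0 x"
    and "\<And>k x. k < q - 2 \<Longrightarrow> (P k has_real_derivative P (Suc k) x) (at x)"
    and "\<And>x. P (q - 2) x = \<alpha> * x + \<beta>"
  shows "q_monotone_on q a b g"
proof -
  have "convex_on {a<..<b} (\<lambda>x. \<alpha> * x + \<beta>)"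
    by (rule convex_on_linorderI) (auto simp: algebra_simps)
  moreover have "continuous_on {a<..<b} (\<lambda>x. \<alpha> * x + \<beta>)"
    by (intro continuous_intros)
  moreover have "P (q - 2) = (\<lambda>x. \<alpha> * x + \<beta>)"
    using assms(4) by auto
  ultimately show ?thesis
    unfolding q_monotone_on_def using assms(1-3) by (intro conjI exI[of _ P]) auto
qed

lemma zero_in_Delta: "(\<lambda>x. 0) \<in> Delta q s y"
proof -
  have "q_monotone_on q a b (\<lambda>x. 0)" for a b
    by (rule q_monotone_onI_affine[where P = "\<lambda>k x. 0" and \<alpha> = 0 and \<beta> = 0]) auto
  then show ?thesis
    unfolding Delta_def periodic_2pi_def by simp
qed

lemma lipschitz_on_imp_locally_abs_cont:
  assumes "lipschitz_on L UNIV g"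
  shows "locally_abs_cont g"
  unfolding locally_abs_cont_def abs_cont_on_def
proof (intro allI impI)
  fix \<epsilon> :: real assume "0 < \<epsilon>"
  have L: "0 \<le> L" "\<And>u l. \<bar>g u - g l\<bar> \<le> L * \<bar>u - l\<bar>"
    using assms by (auto simp: lipschitz_on_def dist_real_def)
  show "\<exists>\<delta>>0. \<forall>n l u. (\<forall>k<n. a \<le> l k \<and> l k \<le> u k \<and> u k \<le> b) \<and>
          (\<forall>j<n. \<forall>k<n. j \<noteq> k \<longrightarrow> u j \<le> l k \<or> u k \<le> l j) \<and>
          (\<Sum>k<n. u k - l k) < \<delta> \<longrightarrow> (\<Sum>k<n. \<bar>g (u k) - g (l k)\<bar>) < \<epsilon>" for a b
  proof (intro exI[of _ "\<epsilon> / (L + 1)"] conjI allI impI)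
    show "0 < \<epsilon> / (L + 1)" using \<open>0 < \<epsilon>\<close> L by simp
    fix n l u
    assume H: "(\<forall>k<n. a \<le> l k \<and> l k \<le> u k \<and> u k \<le> b) \<and>
      (\<forall>j<n. \<forall>k<n. j \<noteq> k \<longrightarrow> u j \<le> l k \<or> u k \<le> l j) \<and>
      (\<Sum>k<n. u k - l k) < \<epsilon> / (L + 1)"
    have "(\<Sum>k<n. \<bar>g (u k) - g (l k)\<bar>) \<le> (\<Sum>k<n. L * (u k - l k))"
    proof (rule sum_mono)
      fix k assume "k \<in> {..<n}"
      then show "\<bar>g (u k) - g (l k)\<bar> \<le> L * (u k - l k)"
        using H L(2)[of "u k" "l k"] by simp
    qed
    also have "\<dots> = L * (\<Sum>k<n. u k - l k)"
      by (simp add: sum_distrib_left)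
    also have "\<dots> \<le> (L + 1) * (\<Sum>k<n. u k - l k)"
      using H by (intro mult_right_mono sum_nonneg) auto
    also have "\<dots> < \<epsilon>"
      using H L(1) by (simp add: pos_less_divide_eq mult.commute)
    finally show "(\<Sum>k<n. \<bar>g (u k) - g (l k)\<bar>) < \<epsilon>" .
  qed
qed

section \<open>Reduction modulo \<open>2 pi\<close> and periodic functions\<close>

definition phase :: "real \<Rightarrow> real \<Rightarrow> real" where
  "phase c x = x - c - 2 * pi * of_int \<lfloor>(x - c) / (2 * pi)\<rfloor>"

lemma floor_period_bounds:
  fixes c x :: real
  defines "N \<equiv> \<lfloor>(x - c) / (2 * pi)\<rfloor>"
  shows "c + 2 * pi * of_int N \<le> x" "x < c + 2 * pi * of_int N + 2 * pi"
proof -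
  have "of_int N \<le> (x - c) / (2 * pi)" "(x - c) / (2 * pi) < of_int N + 1"
    unfolding N_def by linarith+
  then show "c + 2 * pi * of_int N \<le> x" "x < c + 2 * pi * of_int N + 2 * pi"
    by (simp_all add: field_simps)
qed

lemma phase_eqI:
  assumes "c + 2 * pi * of_int N \<le> x" "x < c + 2 * pi * of_int N + 2 * pi"
  shows "phase c x = x - c - 2 * pi * of_int N"
proof -
  have "\<lfloor>(x - c) / (2 * pi)\<rfloor> = N"
    unfolding floor_eq_iff using assms by (simp add: field_simps)
  then show ?thesis
    by (simp add: phase_def)
qed

lemma phase_bounds: "0 \<le> phase c x" "phase c x < 2 * pi"
proof -
  note N = floor_period_bounds[where c = c and x = x]
  show "0 \<le> phase c x"
    using N(1) unfolding phase_def by linarith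
  show "phase c x < 2 * pi"
    using N(2) unfolding phase_def by linarith
qed

lemma phase_add_2pi: "phase c (x + 2 * pi) = phase c x"
proof -
  have "(x + 2 * pi - c) / (2 * pi) = (x - c) / (2 * pi) + 1"
    by (simp add: field_simps)
  then show ?thesis
    by (simp add: phase_def algebra_simps)
qed

lemma phase_eq_0D:
  assumes "phase c x = 0"
  shows "x \<in> range (\<lambda>N::int. c + 2 * pi * of_int N)"
proof
  show "x = c + 2 * pi * of_int \<lfloor>(x - c) / (2 * pi)\<rfloor>"
    using assms by (simp add: phase_def)
qed simp

lemma periodic_2pi_add_int:
  assumes "periodic_2pi g"
  shows "g (x + 2 * pi * of_int N) = g x"
proof -
  have nat: "g (z + 2 * pi * real n) = g z" for z n
  proof (induction n)
    case (Suc n)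
    have "g (z + 2 * pi * real (Suc n)) = g ((z + 2 * pi * real n) + 2 * pi)"
      by (simp add: algebra_simps)
    then show ?case
      using assms Suc.IH unfolding periodic_2pi_def by simp
  qed simp
  show ?thesis
  proof (cases "0 \<le> N")
    case True
    then show ?thesis using nat[of x "nat N"] by simp
  next
    case False
    then show ?thesis using nat[of "x + 2 * pi * of_int N" "nat (- N)"] by simp
  qed
qed

lemma periodic_2pi_bounded:
  assumes "continuous_on UNIV g" "periodic_2pi g"
  obtains B where "\<And>x. \<bar>g x\<bar> \<le> B"
proof -
  obtain B where B: "\<And>t. t \<in> {0..2 * pi} \<Longrightarrow> norm (g t) \<le> B"
    using continuous_on_compact_bound[OF compact_Icc continuous_on_subset[OF assms(1)]] by blast
  have "g x = g (phase 0 x)" for x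
    using periodic_2pi_add_int[OF assms(2), of "phase 0 x" "\<lfloor>x / (2 * pi)\<rfloor>"]
    by (simp add: phase_def)
  then have "\<bar>g x\<bar> \<le> B" for x
    using B[of "phase 0 x"] phase_bounds[of 0 x] by simp
  then show ?thesis by (rule that)
qed

lemma abs_le_sup_norm:
  assumes "continuous_on UNIV g" "periodic_2pi g"
  shows "\<bar>g x\<bar> \<le> sup_norm g"
proof -
  obtain B where "\<And>x. \<bar>g x\<bar> \<le> B"
    using periodic_2pi_bounded[OF assms] by blast
  then show ?thesis
    unfolding sup_norm_def by (intro cSUP_upper bdd_aboveI2) auto
qed

section \<open>Trigonometric polynomials\<close>

text \<open>Based on \<open>(cos, sin)' (t + j pi/2) = (cos, sin) (t + (j + 1) pi/2)\<close>.\<close>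
definition trig_deriv ::
  "(nat \<Rightarrow> real) \<Rightarrow> (nat \<Rightarrow> real) \<Rightarrow> nat \<Rightarrow> nat \<Rightarrow> real \<Rightarrow> real" where
  "trig_deriv a b n j x = (if j = 0 then a 0 else 0) +
     (\<Sum>k=1..n. real k ^ j *
        (a k * cos (real k * x + real j * pi / 2) + b k * sin (real k * x + real j * pi / 2)))"

lemma trig_deriv_has_real_derivative:
  "(trig_deriv a b n j has_real_derivative trig_deriv a b n (Suc j) x) (at x)"
proof -
  have shift_deriv: "((\<lambda>x. r * (A * cos (k * x + t) + B * sin (k * x + t))) has_real_derivative
      r * k * (A * cos (k * x + t + pi / 2) + B * sin (k * x + t + pi / 2))) (at x)" for r A B k t
  proof -
    have "((\<lambda>x. r * (A * cos (k * x + t) + B * sin (k * x + t))) has_real_derivative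
        r * (A * (- sin (k * x + t) * k) + B * (cos (k * x + t) * k))) (at x)"
      by (rule derivative_eq_intros refl | simp)+
    moreover have "cos (k * x + t + pi / 2) = - sin (k * x + t)" "sin (k * x + t + pi / 2) = cos (k * x + t)"
      by (simp_all add: cos_add sin_add)
    ultimately show ?thesis
      by (simp add: algebra_simps)
  qed
  let ?term = "\<lambda>j k x. real k ^ j *
    (a k * cos (real k * x + real j * pi / 2) + b k * sin (real k * x + real j * pi / 2))"
  have arg: "real k * x + real (Suc j) * pi / 2 = real k * x + real j * pi / 2 + pi / 2" for k
    by (simp add: field_simps)
  have term_deriv: "((\<lambda>x. ?term j k x) has_real_derivative ?term (Suc j) k x) (at x)" for k
    by (rule DERIV_cong[OF shift_deriv[of "real k ^ j" "a k" "real k" "real j * pi / 2" "b k"]])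
      (unfold arg, simp add: algebra_simps)
  have "(trig_deriv a b n j has_real_derivative 0 + (\<Sum>k=1..n. ?term (Suc j) k x)) (at x)"
    unfolding trig_deriv_def[abs_def] by (intro DERIV_add DERIV_const DERIV_sum term_deriv)
  then show ?thesis
    by (simp add: trig_deriv_def)
qed

lemma trig_poly_derivs:
  assumes "trig_poly n T"
  obtains Q where "Q 0 = T" "\<And>k x. (Q k has_real_derivative Q (Suc k) x) (at x)"
proof -
  obtain a b where "\<And>x. T x = a 0 + (\<Sum>k=1..n. a k * cos (real k * x) + b k * sin (real k * x))"
    using assms unfolding trig_poly_def by blast
  then have "trig_deriv a b n 0 = T"
    by (auto simp: trig_deriv_def)
  then show ?thesis
    using that trig_deriv_has_real_derivative by blast
qed

lemma trig_poly_zero: "trig_poly n (\<lambda>x. 0)"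
  unfolding trig_poly_def by (intro exI[of _ "\<lambda>k. 0"]) simp

lemma admissible_Y_antimono:
  assumes "admissible_Y s y" "i \<le> j" "j \<le> 2 * s"
  shows "y j \<le> y i"
  using assms(2,3)
proof (induction j rule: dec_induct)
  case (step j)
  then have "y (Suc j) < y j"
    using assms(1) unfolding admissible_Y_def by simp
  with step show ?case by simp
qed simp

lemma admissible_arc_in_period:
  assumes "admissible_Y s y" "i \<in> {1..2 * s}"
  obtains N :: int where "y 1 + 2 * pi * of_int N \<le> y i" "y (i - 1) \<le> y 1 + 2 * pi * of_int N + 2 * pi"
proof -
  have y_dec: "\<forall>i<2 * s. y (Suc i) < y i" and "1 \<le> s" and y0: "y 0 = y (2 * s) + 2 * pi"
    using assms(1) unfolding admissible_Y_def by auto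
  then have y01: "y 1 < y 0"
    using y_dec[rule_format, of 0] by simp
  show ?thesis
  proof (cases "i = 1")
    case True
    have "y (2 * s) \<le> y 1"
      using admissible_Y_antimono[OF assms(1), of 1 "2 * s"] assms(2) by simp
    then show ?thesis
      using that[of 0] True y0 by simp
  next
    case False
    have "y (2 * s) \<le> y i" "y (i - 1) \<le> y 1"
      using False assms(2) admissible_Y_antimono[OF assms(1)] by auto
    then show ?thesis
      using that[of "-1"] y01 y0 by simp
  qed
qed

section \<open>Periodic antiderivatives of the sawtooth\<close>

lemma parabola_bounds:
  assumes "0 \<le> t" "t \<le> 2 * pi"
  shows "0 \<le> t * (2 * pi - t) / 4" "t * (2 * pi - t) / 4 \<le> 2 * t" "t * (2 * pi - t) / 4 \<le> 2 * (2 * pi - t)"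
proof -
  have "t * (2 * pi - t) \<le> t * 8" "t * (2 * pi - t) \<le> 8 * (2 * pi - t)"
    using assms pi_less_4 by (intro mult_left_mono mult_right_mono; simp)+
  then show "0 \<le> t * (2 * pi - t) / 4" "t * (2 * pi - t) / 4 \<le> 2 * t" "t * (2 * pi - t) / 4 \<le> 2 * (2 * pi - t)"
    using assms by simp_all
qed

text \<open>Within one period the slope is at most \<open>pi/2\<close>; across a period boundary both values are
  at most twice the distance to that boundary.\<close>
lemma parabola_phase_lipschitz:
  defines "\<phi> \<equiv> \<lambda>t. t * (2 * pi - t) / 4"
  shows "\<bar>\<phi> (phase c u) - \<phi> (phase c l)\<bar> \<le> 2 * \<bar>u - l\<bar>"
proof -
  have main: "\<bar>\<phi> (phase c u) - \<phi> (phase c l)\<bar> \<le> 2 * (u - l)" if "l \<le> u" for l u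
  proof -
    define Nl where "Nl = \<lfloor>(l - c) / (2 * pi)\<rfloor>"
    define Nu where "Nu = \<lfloor>(u - c) / (2 * pi)\<rfloor>"
    have pl: "phase c l = l - c - 2 * pi * of_int Nl" and pu: "phase c u = u - c - 2 * pi * of_int Nu"
      by (simp_all add: phase_def Nl_def Nu_def)
    have "Nl \<le> Nu"
      unfolding Nl_def Nu_def using \<open>l \<le> u\<close> by (intro floor_mono divide_right_mono) auto
    note bounds = phase_bounds[of c l] phase_bounds[of c u]
    show ?thesis
    proof (cases "Nl = Nu")
      case True
      then have eq: "\<phi> (phase c u) - \<phi> (phase c l) = (u - l) * (2 * pi - phase c u - phase c l) / 4"
        unfolding \<phi>_def pl pu by (simp add: field_simps)
      have "\<bar>\<phi> (phase c u) - \<phi> (phase c l)\<bar> = (u - l) * \<bar>2 * pi - phase c u - phase c l\<bar> / 4"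
        unfolding eq using \<open>l \<le> u\<close> by (simp add: abs_mult)
      also have "\<dots> \<le> (u - l) * 8 / 4"
        using bounds pi_less_4 \<open>l \<le> u\<close> by (intro divide_right_mono mult_left_mono) auto
      finally show ?thesis
        by simp
    next
      case False
      with \<open>Nl \<le> Nu\<close> have "2 * pi * (of_int Nl + 1) \<le> 2 * pi * of_int Nu"
        by simp
      then have "2 * pi - phase c l \<le> c + 2 * pi * of_int Nu - l"
        unfolding pl by (simp add: algebra_simps)
      then have "0 \<le> \<phi> (phase c l)" "\<phi> (phase c l) \<le> 2 * (c + 2 * pi * of_int Nu - l)"
        using parabola_bounds[of "phase c l"] bounds unfolding \<phi>_def by auto
      moreover have "0 \<le> \<phi> (phase c u)" "\<phi> (phase c u) \<le> 2 * (u - (c + 2 * pi * of_int Nu))"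
        using parabola_bounds[of "phase c u"] bounds unfolding \<phi>_def pu by auto
      ultimately show ?thesis
        by (simp add: abs_le_iff)
    qed
  qed
  show ?thesis
    using main[of l u] main[of u l] by (cases "l \<le> u") (auto simp: abs_minus_commute)
qed

text \<open>\<open>p 0\<close> is an \<open>m\<close>-fold antiderivative of the sawtooth \<open>(pi - t)/2\<close> on \<open>[0, 2 pi]\<close>
  whose lower derivatives match at the endpoints, so that \<open>p k \<circ> phase c\<close> is the \<open>k\<close>-th
  derivative of the \<open>2 pi\<close>-periodic function \<open>p 0 \<circ> phase c\<close>.\<close>
locale sawtooth_primitives =
  fixes m :: nat and p :: "nat \<Rightarrow> real \<Rightarrow> real"
  assumes m_pos: "1 \<le> m"
    and p_deriv: "\<And>k t. k < m \<Longrightarrow> (p k has_real_derivative p (Suc k) t) (at t)"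
    and p_periodic: "\<And>k. k < m \<Longrightarrow> p k 0 = p k (2 * pi)"
    and p_top: "\<And>t. p m t = (pi - t) / 2"

lemma sawtooth_primitives_exist:
  assumes "1 \<le> m"
  shows "\<exists>p. sawtooth_primitives m p"
  using assms
proof (induction m rule: nat_induct_at_least)
  case base
  define p :: "nat \<Rightarrow> real \<Rightarrow> real" where
    "p = (\<lambda>k t. if k = 0 then t * (2 * pi - t) / 4 else (pi - t) / 2)"
  have "(p 0 has_real_derivative p 1 t) (at t)" for t
    unfolding p_def by (auto intro!: derivative_eq_intros simp: field_simps)
  then have "sawtooth_primitives 1 p"
    by unfold_locales (auto simp: p_def)
  then show ?case
    by blast
next
  case (Suc m)
  then obtain p where "sawtooth_primitives m p"
    by blast
  then interpret sawtooth_primitives m p .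
  have "isCont (p 0) t" for t
    using p_deriv[of 0 t] m_pos by (auto intro: DERIV_isCont)
  then obtain G where G: "\<And>t. (G has_real_derivative p 0 t) (at t)"
    using einterval_antiderivative[of "-\<infinity>" "\<infinity>" "p 0"]
    by (auto simp: has_real_derivative_iff_has_vector_derivative)
  text \<open>Subtracting the mean of \<open>p 0\<close> makes the new antiderivative periodic.\<close>
  define \<mu> where "\<mu> = (G (2 * pi) - G 0) / (2 * pi)"
  define p' :: "nat \<Rightarrow> real \<Rightarrow> real" where
    "p' = (\<lambda>k t. if k = 0 then G t - \<mu> * t else if k = 1 then p 0 t - \<mu> else p (k - 1) t)"
  have "sawtooth_primitives (Suc m) p'"
  proof unfold_locales
    fix k t assume "k < Suc m"
    then show "(p' k has_real_derivative p' (Suc k) t) (at t)"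
      using G[of t] p_deriv[of "k - 1" t] m_pos
      by (cases "k = 0"; cases "k = 1") (auto simp: p'_def intro!: derivative_eq_intros)
  next
    fix k assume "k < Suc m"
    then show "p' k 0 = p' k (2 * pi)"
      using p_periodic[of "k - 1"] p_periodic[of 0] m_pos by (auto simp: p'_def \<mu>_def)
  next
    show "p' (Suc m) t = (pi - t) / 2" for t
      using p_top m_pos by (simp add: p'_def)
  qed simp
  then show ?case
    by blast
qed

context sawtooth_primitives
begin

lemma p_penultimate_eq: "p (m - 1) t = t * (2 * pi - t) / 4 + p (m - 1) 0"
proof -
  have "((\<lambda>t. p (m - 1) t - t * (2 * pi - t) / 4) has_real_derivative 0) (at t)" for t
    using p_deriv[of "m - 1" t] m_pos p_top[of t]
    by (auto intro!: derivative_eq_intros simp: field_simps)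
  then show ?thesis
    using DERIV_isconst_all[of "\<lambda>t. p (m - 1) t - t * (2 * pi - t) / 4" t 0] by simp
qed

lemma p_shift_has_derivative:
  "k < m \<Longrightarrow> ((\<lambda>x. p k (x - d)) has_real_derivative p (Suc k) (x - d)) (at x)"
  using p_deriv[of k "x - d"] DERIV_shift[of "p k" _ x "- d"] by simp

lemma p_phase_has_derivative:
  assumes "k < m" "Suc k < m \<or> phase c x \<noteq> 0"
  shows "((\<lambda>x. p k (phase c x)) has_real_derivative p (Suc k) (phase c x)) (at x)"
proof -
  define x0 where "x0 = c + 2 * pi * of_int \<lfloor>(x - c) / (2 * pi)\<rfloor>"
  have x0: "x0 \<le> x" "x < x0 + 2 * pi"
    unfolding x0_def using floor_period_bounds[where c = c and x = x] by simp_all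
  have piece: "phase c z = z - x0" if "x0 \<le> z" "z < x0 + 2 * pi" for z
    using phase_eqI[of c "\<lfloor>(x - c) / (2 * pi)\<rfloor>" z] that by (simp add: x0_def algebra_simps)
  show ?thesis
  proof (cases "x = x0")
    case False
    then have "x \<in> {x0<..<x0 + 2 * pi}"
      using x0 by simp
    then show ?thesis
      using has_field_derivative_transform_within_open[OF p_shift_has_derivative[OF \<open>k < m\<close>],
          where S = "{x0<..<x0 + 2 * pi}"] piece x0 by simp
  next
    case True
    then have "phase c x = 0" "Suc k < m"
      using piece[of x] x0 assms(2) by auto
    have left: "phase c z = z - (x0 - 2 * pi)" if "x - 2 * pi < z" "z < x" for z
      using piece[of "z + 2 * pi"] phase_add_2pi[of c z] that True by simp
    show ?thesis
    proof (rule has_real_derivative_glue[where gl = "\<lambda>z. p k (z - (x0 - 2 * pi))"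
          and gr = "\<lambda>z. p k (z - x0)" and \<delta> = "2 * pi"])
      show "((\<lambda>z. p k (z - (x0 - 2 * pi))) has_real_derivative p (Suc k) (phase c x)) (at x)"
        using p_shift_has_derivative[OF \<open>k < m\<close>, where x = x and d = "x0 - 2 * pi"] True \<open>phase c x = 0\<close>
          p_periodic[OF \<open>Suc k < m\<close>] by simp
      show "((\<lambda>z. p k (z - x0)) has_real_derivative p (Suc k) (phase c x)) (at x)"
        using p_shift_has_derivative[OF \<open>k < m\<close>, where x = x and d = x0] True \<open>phase c x = 0\<close> by simp
      show "p k (x - (x0 - 2 * pi)) = p k (phase c x)"
        using True \<open>phase c x = 0\<close> p_periodic[OF \<open>k < m\<close>] by simp
    qed (use True \<open>phase c x = 0\<close> left piece in auto)
  qed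
qed

lemma p_penultimate_phase_lipschitz: "lipschitz_on 2 UNIV (\<lambda>x. p (m - 1) (phase c x))"
  using parabola_phase_lipschitz[of c] unfolding p_penultimate_eq[of "phase c _"]
  by (intro lipschitz_onI) (auto simp: dist_real_def)

lemma p_phase_continuous:
  assumes "k < m"
  shows "continuous_on UNIV (\<lambda>x. p k (phase c x))"
proof (cases "Suc k < m")
  case True
  then show ?thesis
    using p_phase_has_derivative[OF assms]
    by (intro continuous_at_imp_continuous_on ballI DERIV_isCont) blast
next
  case False
  then have "k = m - 1"
    using assms by simp
  then show ?thesis
    using lipschitz_on_continuous_on[OF p_penultimate_phase_lipschitz] by simp
qed

definition F :: "real \<Rightarrow> real \<Rightarrow> real" where
  "F c x = p 0 (phase c x)"

lemma F_periodic: "periodic_2pi (F c)"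
  unfolding periodic_2pi_def F_def by (simp add: phase_add_2pi)

lemma F_continuous: "continuous_on UNIV (F c)"
  using p_phase_continuous[of 0 c] m_pos unfolding F_def[abs_def] by simp

lemma F_in_W: "F c \<in> W m"
  unfolding W_def
proof (intro CollectI conjI F_periodic exI[of _ "\<lambda>k x. p k (phase c x)"])
  show "(\<lambda>x. p 0 (phase c x)) = F c"
    by (simp add: F_def[abs_def])
  show "\<forall>k<m - 1. \<forall>x. ((\<lambda>x. p k (phase c x)) has_real_derivative p (Suc k) (phase c x)) (at x)"
  proof (intro allI impI)
    fix k x assume "k < m - 1"
    then have "k < m" "Suc k < m"
      by simp_all
    then show "((\<lambda>x. p k (phase c x)) has_real_derivative p (Suc k) (phase c x)) (at x)"
      using p_phase_has_derivative[of k c x] by blast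
  qed
  show "locally_abs_cont (\<lambda>x. p (m - 1) (phase c x))"
    by (rule lipschitz_on_imp_locally_abs_cont[OF p_penultimate_phase_lipschitz])
  have "AE x in lborel. x \<notin> range (\<lambda>N::int. c + 2 * pi * of_int N)"
    by (intro AE_not_in countable_imp_null_set_lborel countable_image) simp
  then show "AE x in lborel. \<exists>d. ((\<lambda>x. p (m - 1) (phase c x)) has_real_derivative d) (at x) \<and> \<bar>d\<bar> \<le> 2"
  proof (rule eventually_mono)
    fix x assume "x \<notin> range (\<lambda>N::int. c + 2 * pi * of_int N)"
    then have "phase c x \<noteq> 0"
      using phase_eq_0D by blast
    then have "((\<lambda>x. p (m - 1) (phase c x)) has_real_derivative p (Suc (m - 1)) (phase c x)) (at x)"
      using p_phase_has_derivative[of "m - 1" c x] m_pos by fastforce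
    also have "p (Suc (m - 1)) (phase c x) = (pi - phase c x) / 2"
      using m_pos p_top by simp
    finally show "\<exists>d. ((\<lambda>x. p (m - 1) (phase c x)) has_real_derivative d) (at x) \<and> \<bar>d\<bar> \<le> 2"
      using phase_bounds[of c x] pi_less_4 pi_gt3 by auto
  qed
qed

lemma F_in_Delta:
  assumes "admissible_Y s y"
  shows "F (y 1) \<in> Delta (m + 2) s y"
  unfolding Delta_def
proof (intro CollectI conjI ballI F_periodic F_continuous)
  fix i assume "i \<in> {1..2 * s}"
  then obtain N :: int where N: "y 1 + 2 * pi * of_int N \<le> y i" "y (i - 1) \<le> y 1 + 2 * pi * of_int N + 2 * pi"
    using admissible_arc_in_period[OF assms] by blast
  define x0 where "x0 = y 1 + 2 * pi * of_int N"
  define \<sigma> :: real where "\<sigma> = (- 1) ^ (i - 1)"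
  show "q_monotone_on (m + 2) (y i) (y (i - 1)) (\<lambda>x. (- 1) ^ (i - 1) * F (y 1) x)"
  proof (rule q_monotone_onI_affine[where P = "\<lambda>k x. \<sigma> * p k (x - x0)"
        and \<alpha> = "- \<sigma> / 2" and \<beta> = "\<sigma> * (pi + x0) / 2"])
    show "continuous_on {y i..y (i - 1)} (\<lambda>x. (- 1) ^ (i - 1) * F (y 1) x)"
      using continuous_on_subset[OF F_continuous] by (intro continuous_on_mult_left) blast
    show "(- 1) ^ (i - 1) * F (y 1) x = \<sigma> * p 0 (x - x0)" if "x \<in> {y i<..<y (i - 1)}" for x
    proof -
      have "phase (y 1) x = x - x0"
        using phase_eqI[of "y 1" N x] N that by (simp add: x0_def)
      then show ?thesis
        by (simp add: F_def \<sigma>_def)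
    qed
    show "((\<lambda>x. \<sigma> * p k (x - x0)) has_real_derivative \<sigma> * p (Suc k) (x - x0)) (at x)"
      if "k < m + 2 - 2" for k x
    proof -
      have "k < m"
        using that by simp
      then show ?thesis
        by (rule DERIV_cmult[OF p_shift_has_derivative])
    qed
    show "\<sigma> * p (m + 2 - 2) (x - x0) = - \<sigma> / 2 * x + \<sigma> * (pi + x0) / 2" for x
    proof -
      have "\<sigma> * ((pi - (x - x0)) / 2) = - \<sigma> / 2 * x + \<sigma> * (pi + x0) / 2"
        by (simp add: field_simps)
      then show ?thesis
        by (simp add: p_top)
    qed
  qed
qed

lemma F_deriv_samples:
  assumes Q: "\<And>k z. (Q k has_real_derivative Q (Suc k) z) (at z)"
    and close: "\<And>z. \<bar>F c z - Q 0 z\<bar> \<le> e" and "0 < h"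
    and window: "c + 2 * pi * of_int N \<le> x" "x + real m * h < c + 2 * pi * of_int N + 2 * pi"
  obtains \<zeta> \<xi> where "\<zeta> \<in> {x..x + real m * h}" "\<xi> \<in> {x..x + real m * h}"
    "\<bar>(pi - (\<zeta> - c - 2 * pi * of_int N)) / 2 - Q m \<xi>\<bar> \<le> 2 ^ m * e / h ^ m"
proof -
  define x0 where "x0 = c + 2 * pi * of_int N"
  have "F c z = p 0 (z - x0)" if "x \<le> z" "z \<le> x + real m * h" for z
    using phase_eqI[of c N z] window that by (simp add: F_def x0_def diff_diff_eq)
  then obtain \<zeta> \<xi> where "\<zeta> \<in> {x..x + real m * h}" "\<xi> \<in> {x..x + real m * h}"
    "\<bar>p m (\<zeta> - x0) - Q m \<xi>\<bar> \<le> 2 ^ m * e / h ^ m"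
    using fwd_diff_derivs_close[where f = "F c" and g = "Q 0" and P = "\<lambda>k z. p k (z - x0)" and Q = Q]
      \<open>0 < h\<close> close p_shift_has_derivative Q by blast
  then show ?thesis
    using that by (simp add: p_top x0_def diff_diff_eq)
qed

lemma sup_norm_F_minus_trig_ge:
  assumes T: "trig_poly n T" "continuous_on UNIV T" "periodic_2pi T"
    and mono_right: "q_monotone_on (m + 2) c b T"
    and mono_left: "q_monotone_on (m + 2) a c (\<lambda>x. - T x)"
    and H: "0 < H" "H \<le> 1 / 2" "a < c - 4 * H" "c + 4 * H < b"
  shows "(H / m) ^ m / (5 * 2 ^ m) \<le> sup_norm (\<lambda>x. F c x - T x)"
proof -
  obtain Q where Q0: "Q 0 = T" and Q: "\<And>k x. (Q k has_real_derivative Q (Suc k) x) (at x)"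
    using trig_poly_derivs[OF T(1)] by blast
  have conv_right: "convex_on {c<..<b} (Q m)"
    using q_monotone_on_convex_deriv[OF mono_right, of Q] Q Q0 by auto
  have conv_left: "convex_on {a<..<c} (\<lambda>x. - Q m x)"
    using q_monotone_on_convex_deriv[OF mono_left, of "\<lambda>k x. - Q k x"] Q Q0 by (auto intro: DERIV_minus)
  have close: "\<bar>F c z - Q 0 z\<bar> \<le> sup_norm (\<lambda>x. F c x - T x)" for z
    unfolding Q0 using F_continuous F_periodic T(2,3)
    by (intro abs_le_sup_norm continuous_on_diff) (auto simp: periodic_2pi_def)
  define h where "h = H / m"
  define \<eta> where "\<eta> = 2 ^ m * sup_norm (\<lambda>x. F c x - T x) / h ^ m"
  have h: "0 < h" "real m * h = H"
    using H m_pos by (auto simp: h_def)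
  have "0 \<le> \<eta>"
    using close[of 0] h by (auto simp: \<eta>_def)
  note sample = F_deriv_samples[OF Q close \<open>0 < h\<close>, unfolded h(2) \<eta>_def[symmetric]]
  obtain \<zeta>1 \<xi>1 where s1: "\<zeta>1 \<in> {c - 4 * H..c - 3 * H}" "\<xi>1 \<in> {c - 4 * H..c - 3 * H}"
    "\<bar>(pi - (\<zeta>1 - c + 2 * pi)) / 2 - Q m \<xi>1\<bar> \<le> \<eta>"
    by (rule sample[of "-1" "c - 4 * H"]) (use H pi_gt3 in \<open>auto simp: algebra_simps\<close>)
  obtain \<zeta>2 \<xi>2 where s2: "\<zeta>2 \<in> {c - 2 * H..c - H}" "\<xi>2 \<in> {c - 2 * H..c - H}"
    "\<bar>(pi - (\<zeta>2 - c + 2 * pi)) / 2 - Q m \<xi>2\<bar> \<le> \<eta>"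
    by (rule sample[of "-1" "c - 2 * H"]) (use H pi_gt3 in \<open>auto simp: algebra_simps\<close>)
  obtain \<zeta>3 \<xi>3 where s3: "\<zeta>3 \<in> {c + H..c + 2 * H}" "\<xi>3 \<in> {c + H..c + 2 * H}"
    "\<bar>(pi - (\<zeta>3 - c)) / 2 - Q m \<xi>3\<bar> \<le> \<eta>"
    by (rule sample[of 0 "c + H"]) (use H pi_gt3 in \<open>auto simp: algebra_simps\<close>)
  obtain \<zeta>4 \<xi>4 where s4: "\<zeta>4 \<in> {c + 3 * H..c + 4 * H}" "\<xi>4 \<in> {c + 3 * H..c + 4 * H}"
    "\<bar>(pi - (\<zeta>4 - c)) / 2 - Q m \<xi>4\<bar> \<le> \<eta>"
    by (rule sample[of 0 "c + 3 * H"]) (use H pi_gt3 in \<open>auto simp: algebra_simps\<close>)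
  text \<open>Convexity right of \<open>c\<close> and concavity left of \<open>c\<close> keep \<open>Q m\<close> from following the
    jump of the sawtooth at \<open>c\<close>.\<close>
  have rises: "Q m \<xi>2 - Q m \<xi>1 \<le> 2 * \<eta>" "Q m \<xi>4 - Q m \<xi>3 \<le> 2 * \<eta>"
    using s1 s2 s3 s4 by (auto simp: abs_le_iff field_simps)
  have "Q m \<xi>3 - Q m \<xi>2 \<le> 4 * (2 * \<eta>)"
    using convex_concave_rise_bound[OF conv_right conv_left DERIV_isCont[OF Q] H(1,3,4) _
        s1(2) s2(2) rises(1) s3(2) s4(2) rises(2)] \<open>0 \<le> \<eta>\<close> by simp
  then have "pi - 2 * H \<le> 10 * \<eta>"
    using s2 s3 by (auto simp: abs_le_iff field_simps)
  then have "1 / 5 \<le> \<eta>"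
    using H pi_gt3 by simp
  then show ?thesis
    using h by (simp add: \<eta>_def h_def[symmetric] field_simps)
qed

lemma E_shape_F_lower_bound:
  assumes "admissible_Y s y"
  shows "\<exists>C>0. \<forall>n. C \<le> E_shape n (m + 2) s y (F (y 1))"
proof -
  have y_dec: "\<forall>i<2 * s. y (Suc i) < y i" and "1 \<le> s"
    using assms unfolding admissible_Y_def by auto
  then have "y 2 < y 1" "y 1 < y 0"
    using y_dec[rule_format, of 0] y_dec[rule_format, of 1] by (simp_all add: numeral_2_eq_2)
  define H where "H = min (1 / 2) (min ((y 1 - y 2) / 5) ((y 0 - y 1) / 5))"
  have H: "0 < H" "H \<le> 1 / 2" "y 2 < y 1 - 4 * H" "y 1 + 4 * H < y 0"
    using \<open>y 2 < y 1\<close> \<open>y 1 < y 0\<close> by (auto simp: H_def min_def field_simps)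
  have "(H / m) ^ m / (5 * 2 ^ m) \<le> E_shape n (m + 2) s y (F (y 1))" for n
    unfolding E_shape_def
  proof (rule cINF_greatest)
    show "{T. trig_poly n T \<and> T \<in> Delta (m + 2) s y} \<noteq> {}"
      using trig_poly_zero zero_in_Delta by blast
    fix T assume "T \<in> {T. trig_poly n T \<and> T \<in> Delta (m + 2) s y}"
    then have T: "trig_poly n T" "continuous_on UNIV T" "periodic_2pi T"
      and mono: "\<forall>i\<in>{1..2 * s}. q_monotone_on (m + 2) (y i) (y (i - 1)) (\<lambda>x. (- 1) ^ (i - 1) * T x)"
      unfolding Delta_def by auto
    have "q_monotone_on (m + 2) (y 1) (y 0) T" "q_monotone_on (m + 2) (y 2) (y 1) (\<lambda>x. - T x)"
      using mono[rule_format, of 1] mono[rule_format, of 2] \<open>1 \<le> s\<close> by simp_all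
    then show "(H / m) ^ m / (5 * 2 ^ m) \<le> sup_norm (\<lambda>x. F (y 1) x - T x)"
      using sup_norm_F_minus_trig_ge[OF T] H by blast
  qed
  moreover have "0 < (H / m) ^ m / (5 * 2 ^ m)"
    using H m_pos by simp
  ultimately show ?thesis
    by blast
qed

end

theorem theorem1p3:
  fixes q s :: nat and y :: "nat \<Rightarrow> real"
  assumes "q \<ge> 3" and "admissible_Y s y"
  shows "\<exists>f. f \<in> Delta q s y \<and> f \<in> W (q - 2) \<and>
           (\<exists>C>0. \<forall>n\<ge>1. E_shape n q s y f \<ge> C)"
proof -
  define m where "m = q - 2"
  have "1 \<le> m" and q: "q = m + 2"
    using assms(1) by (simp_all add: m_def)
  obtain p where "sawtooth_primitives m p"
    using sawtooth_primitives_exist[OF \<open>1 \<le> m\<close>] ..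
  then interpret sawtooth_primitives m p .
  have "F (y 1) \<in> Delta q s y" "F (y 1) \<in> W (q - 2)" "\<exists>C>0. \<forall>n. C \<le> E_shape n q s y (F (y 1))"
    unfolding q using F_in_Delta F_in_W E_shape_F_lower_bound assms(2) by simp_all
  then show ?thesis
    by blast
qed

end
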